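(* Let $m\geq 3$, let $f$ be a positive smooth function of one real variable, and consider the Egorov space $(\mathbb{R}^m,g_f)$ with $g_f=f(x^m)\sum_{i=1}^{m-2}(dx^i)^2+2dx^{m-1}dx^m$. Let $\widehat{f}$ be a positive smooth function of one real variable and $\widehat{g}_{\widehat{f}}=\widehat{f}(x^m)\sum_{i=1}^{m-2}(dx^i)^2+2dx^{m-1}dx^m$. Then $\widehat{g}_{\widehat{f}}$ is harmonic with respect to $g_f$ if and only if $\widehat{f}'=f'$.
   Context: A pseudo-Riemannian metric $\widehat{h}$ on a manifold $N$ is harmonic with respect to a pseudo-Riemannian metric $h$ if the identity map $I:(N,h)\to(N,\widehat{h})$ is a harmonic map; in local coordinates, $h^{ij}(\widehat{\Gamma}^k_{ij}-\Gamma^k_{ij})=0$ for all $k$, where $\Gamma,\widehat{\Gamma}$ are the Christoffel symbols of $h,\widehat{h}$. *)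

theory Defs
  imports "HOL-Analysis.Analysis"
begin

text \<open>Points of R^m: coordinate functions p with coordinates p 1, ..., p m
  (all other entries zero). A (pseudo-Riemannian) metric in global coordinates is
  a function G giving the components G p i j at the point p, for i j in {1..m}.\<close>

definition coords :: "nat \<Rightarrow> (nat \<Rightarrow> real) set" where
  "coords m = {p. \<forall>i. i \<notin> {1..m} \<longrightarrow> p i = 0}"

definition smooth_fun :: "(real \<Rightarrow> real) \<Rightarrow> bool" where
  "smooth_fun f \<longleftrightarrow> (\<forall>n x. ((deriv ^^ n) f) differentiable (at x))"

definition partial :: "nat \<Rightarrow> ((nat \<Rightarrow> real) \<Rightarrow> real) \<Rightarrow> (nat \<Rightarrow> real) \<Rightarrow> real" where
  "partial l F p = deriv (\<lambda>t. F (p(l := p l + t))) 0"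

definition metric_inv ::
  "nat \<Rightarrow> ((nat \<Rightarrow> real) \<Rightarrow> nat \<Rightarrow> nat \<Rightarrow> real) \<Rightarrow> (nat \<Rightarrow> real) \<Rightarrow> nat \<Rightarrow> nat \<Rightarrow> real" where
  "metric_inv m G p = (THE H.
      (\<forall>i\<in>{1..m}. \<forall>k\<in>{1..m}. (\<Sum>j=1..m. H i j * G p j k) = (if i = k then 1 else 0)) \<and>
      (\<forall>i j. i \<notin> {1..m} \<or> j \<notin> {1..m} \<longrightarrow> H i j = 0))"

definition christoffel ::
  "nat \<Rightarrow> ((nat \<Rightarrow> real) \<Rightarrow> nat \<Rightarrow> nat \<Rightarrow> real) \<Rightarrow> nat \<Rightarrow> nat \<Rightarrow> nat \<Rightarrow> (nat \<Rightarrow> real) \<Rightarrow> real" where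
  "christoffel m G k i j p =
     (1/2) * (\<Sum>l=1..m. metric_inv m G p k l *
        (partial i (\<lambda>q. G q j l) p + partial j (\<lambda>q. G q i l) p - partial l (\<lambda>q. G q i j) p))"

definition harmonic_metric ::
  "nat \<Rightarrow> ((nat \<Rightarrow> real) \<Rightarrow> nat \<Rightarrow> nat \<Rightarrow> real) \<Rightarrow> ((nat \<Rightarrow> real) \<Rightarrow> nat \<Rightarrow> nat \<Rightarrow> real) \<Rightarrow> bool" where
  "harmonic_metric m G Ghat \<longleftrightarrow>
     (\<forall>p\<in>coords m. \<forall>k\<in>{1..m}.
        (\<Sum>i=1..m. \<Sum>j=1..m. metric_inv m G p i j *
            (christoffel m Ghat k i j p - christoffel m G k i j p)) = 0)"

definition egorov :: "nat \<Rightarrow> (real \<Rightarrow> real) \<Rightarrow> (nat \<Rightarrow> real) \<Rightarrow> nat \<Rightarrow> nat \<Rightarrow> real" where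
  "egorov m f p i j =
     (if i \<in> {1..m-2} \<and> j = i then f (p m)
      else if (i = m - 1 \<and> j = m) \<or> (i = m \<and> j = m - 1) then 1
      else 0)"

end

theory Submission
  imports Defs "HOL-Combinatorics.Transposition"
begin

text \<open>Row i of the Egorov metric g_f has a single nonzero entry, in column \<sigma> i, where \<sigma>
  swaps m - 1 and m; hence g_f is inverted by g_{1/f}. The entries depend on x^m alone, so of the
  Christoffel symbols \<Gamma>^k_{i,\<sigma> i} met by the contraction with this inverse only
  \<Gamma>^{m-1}_{ii} = -f'/2 (i \<le> m - 2) is nonzero. Contracting the symbols of g_fhat with the inverse
  of g_f therefore gives -(m-2) fhat'/(2f) in direction m - 1 and zero otherwise, so the tension of
  the identity is (m-2)(f' - fhat')/(2f) in that direction, which vanishes iff fhat' = f' as m \<ge> 3.\<close>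

lemma partial_const: "partial l (\<lambda>q. c) p = 0"
  unfolding partial_def by simp

lemma partial_comp_coord:
  assumes "h differentiable (at (p m))"
  shows "partial l (\<lambda>q. h (q m)) p = (if l = m then deriv h (p m) else 0)"
proof (cases "l = m")
  case True
  have "(h has_real_derivative deriv h (p m)) (at (p m + 0))"
    using assms by (simp add: DERIV_deriv_iff_real_differentiable)
  moreover have "((\<lambda>t. p m + t) has_real_derivative 1) (at 0)"
    by (auto intro!: derivative_eq_intros)
  ultimately have "((\<lambda>t. h (p m + t)) has_real_derivative deriv h (p m)) (at 0)"
    using DERIV_chain2 by fastforce
  then show ?thesis
    using True unfolding partial_def by (simp add: DERIV_imp_deriv)
qed (simp add: partial_def)

lemma metric_inv_eqI:
  assumes left: "\<And>i k. i \<in> {1..m} \<Longrightarrow> k \<in> {1..m} \<Longrightarrow>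
      (\<Sum>j=1..m. H i j * G p j k) = (if i = k then 1 else 0)"
    and right: "\<And>i k. i \<in> {1..m} \<Longrightarrow> k \<in> {1..m} \<Longrightarrow>
      (\<Sum>j=1..m. G p i j * H j k) = (if i = k then 1 else 0)"
    and support: "\<And>i j. i \<notin> {1..m} \<or> j \<notin> {1..m} \<Longrightarrow> H i j = 0"
  shows "metric_inv m G p = H"
  unfolding metric_inv_def
proof (rule the_equality)
  fix H'
  assume H': "(\<forall>i\<in>{1..m}. \<forall>k\<in>{1..m}. (\<Sum>j=1..m. H' i j * G p j k) = (if i = k then 1 else 0)) \<and>
      (\<forall>i j. i \<notin> {1..m} \<or> j \<notin> {1..m} \<longrightarrow> H' i j = 0)"
  show "H' = H"
  proof (intro ext)
    fix i k
    show "H' i k = H i k"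
    proof (cases "i \<in> {1..m} \<and> k \<in> {1..m}")
      case True
      have "H' i k = (\<Sum>j=1..m. H' i j * (if j = k then 1 else 0))"
        using True by (simp add: if_distrib sum.delta cong: if_cong)
      also have "\<dots> = (\<Sum>j=1..m. H' i j * (\<Sum>l=1..m. G p j l * H l k))"
        using True right by (intro sum.cong) auto
      also have "\<dots> = (\<Sum>l=1..m. (\<Sum>j=1..m. H' i j * G p j l) * H l k)"
        by (simp add: sum_distrib_left sum_distrib_right mult.assoc) (rule sum.swap)
      also have "\<dots> = (\<Sum>l=1..m. if i = l then H l k else 0)"
        using True H' by (intro sum.cong) auto
      also have "\<dots> = H i k"
        using True by simp
      finally show ?thesis .
    qed (use H' support in auto)
  qed
qed (use left support in auto)

definition egorov_partner :: "nat \<Rightarrow> nat \<Rightarrow> nat" where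
  "egorov_partner m = Transposition.transpose (m - 1) m"

lemma egorov_partner_involutory [simp]: "egorov_partner m (egorov_partner m i) = i"
  by (simp add: egorov_partner_def)

lemma egorov_partner_eq_iff [simp]: "egorov_partner m i = egorov_partner m j \<longleftrightarrow> i = j"
  by (metis egorov_partner_involutory)

lemma egorov_partner_eq:
  "m \<ge> 1 \<Longrightarrow> egorov_partner m i = (if i = m - 1 then m else if i = m then m - 1 else i)"
  unfolding egorov_partner_def Transposition.transpose_def by auto

lemma egorov_symmetric: "egorov m g p i j = egorov m g p j i"
  unfolding egorov_def by auto

lemma egorov_eq_0:
  assumes "m \<ge> 2" and "j \<noteq> egorov_partner m i"
  shows "egorov m g p i j = 0"
  using assms by (auto simp: egorov_def egorov_partner_eq split: if_splits)

lemma egorov_partner_entry: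
  assumes "m \<ge> 2" and "i \<in> {1..m}"
  shows "egorov m g p i (egorov_partner m i) = (if i \<le> m - 2 then g (p m) else 1)"
  using assms by (auto simp: egorov_def egorov_partner_eq split: if_splits)

lemma sum_egorov_row:
  assumes "m \<ge> 2" and "i \<in> {1..m}"
  shows "(\<Sum>j=1..m. egorov m g p i j * v j) =
    egorov m g p i (egorov_partner m i) * v (egorov_partner m i)"
proof -
  have "egorov_partner m i \<in> {1..m}"
    using assms by (auto simp: egorov_partner_eq)
  moreover have "(\<Sum>j=1..m. egorov m g p i j * v j) =
      (\<Sum>j=1..m. if j = egorov_partner m i then egorov m g p i j * v j else 0)"
    using assms(1) by (intro sum.cong) (auto simp: egorov_eq_0)
  ultimately show ?thesis by simp
qed

lemma sum_egorov_mult_egorov: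
  assumes "m \<ge> 2" and "i \<in> {1..m}" and "k \<in> {1..m}"
  shows "(\<Sum>j=1..m. egorov m a p i j * egorov m b p j k) =
    (if i = k then if i \<le> m - 2 then a (p m) * b (p m) else 1 else 0)"
proof -
  have "egorov m b p (egorov_partner m i) k = (if i = k then egorov m b p i (egorov_partner m i) else 0)"
    using assms(1) by (auto simp: egorov_symmetric[of m b p _ k] egorov_eq_0)
  then show ?thesis
    unfolding sum_egorov_row[OF assms(1,2)] egorov_partner_entry[OF assms(1,2)]
      egorov_partner_entry[OF assms(1,3)]
    by simp
qed

lemma metric_inv_egorov:
  assumes "m \<ge> 2" and "g (p m) \<noteq> 0"
  shows "metric_inv m (egorov m g) p = egorov m (\<lambda>x. 1 / g x) p"
proof (rule metric_inv_eqI)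
  fix i k :: nat
  assume "i \<in> {1..m}" "k \<in> {1..m}"
  note mult = sum_egorov_mult_egorov[OF assms(1) this]
  show "(\<Sum>j=1..m. egorov m (\<lambda>x. 1 / g x) p i j * egorov m g p j k) = (if i = k then 1 else 0)"
    and "(\<Sum>j=1..m. egorov m g p i j * egorov m (\<lambda>x. 1 / g x) p j k) = (if i = k then 1 else 0)"
    using mult[of "\<lambda>x. 1 / g x" p g] mult[of g p "\<lambda>x. 1 / g x"] assms(2) by simp_all
qed (use assms in \<open>auto simp: egorov_def\<close>)

lemma partial_egorov:
  assumes "g differentiable (at (p m))"
  shows "partial l (\<lambda>q. egorov m g q i j) p =
    (if l = m \<and> i \<in> {1..m-2} \<and> j = i then deriv g (p m) else 0)"
proof (cases "i \<in> {1..m-2} \<and> j = i")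
  case True
  then have "(\<lambda>q. egorov m g q i j) = (\<lambda>q. g (q m))"
    by (simp add: egorov_def)
  then show ?thesis
    using True partial_comp_coord[of g p m, OF assms] by simp
next
  case False
  then have "(\<lambda>q. egorov m g q i j) = (\<lambda>q. egorov m g p i j)"
    by (auto simp: egorov_def)
  then show ?thesis
    using False partial_const by metis
qed

lemma christoffel_egorov:
  assumes m: "m \<ge> 2" and "g (p m) \<noteq> 0" and d: "g differentiable (at (p m))"
    and i: "i \<in> {1..m}" and k: "k \<in> {1..m}"
  shows "christoffel m (egorov m g) k i (egorov_partner m i) p =
    (if i \<le> m - 2 \<and> k = m - 1 then - deriv g (p m) / 2 else 0)"
proof -
  let ?i' = "egorov_partner m i" and ?k' = "egorov_partner m k"
  have "christoffel m (egorov m g) k i ?i' p =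
      (1/2) * (egorov m (\<lambda>x. 1 / g x) p k ?k' *
        (partial i (\<lambda>q. egorov m g q ?i' ?k') p + partial ?i' (\<lambda>q. egorov m g q i ?k') p
          - partial ?k' (\<lambda>q. egorov m g q i ?i') p))"
    unfolding christoffel_def metric_inv_egorov[of m g p, OF m assms(2)] sum_egorov_row[OF m k] ..
  also have "\<dots> = - (1/2) * egorov m (\<lambda>x. 1 / g x) p k ?k' * partial ?k' (\<lambda>q. egorov m g q i ?i') p"
  proof -
    have "partial i (\<lambda>q. egorov m g q ?i' ?k') p = 0"
      and "partial ?i' (\<lambda>q. egorov m g q i ?k') p = 0"
      using m unfolding partial_egorov[of g p m, OF d] by (auto simp: egorov_partner_eq)
    then show ?thesis by simp
  qed
  also have "\<dots> = (if i \<le> m - 2 \<and> k = m - 1 then - deriv g (p m) / 2 else 0)"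
    unfolding partial_egorov[of g p m, OF d] egorov_partner_entry[OF m k]
    using m i k by (auto simp: egorov_partner_eq)
  finally show ?thesis .
qed

definition contracted_christoffel ::
  "nat \<Rightarrow> ((nat \<Rightarrow> real) \<Rightarrow> nat \<Rightarrow> nat \<Rightarrow> real) \<Rightarrow> ((nat \<Rightarrow> real) \<Rightarrow> nat \<Rightarrow> nat \<Rightarrow> real) \<Rightarrow>
    nat \<Rightarrow> (nat \<Rightarrow> real) \<Rightarrow> real" where
  "contracted_christoffel m G Ghat k p =
     (\<Sum>i=1..m. \<Sum>j=1..m. metric_inv m G p i j * christoffel m Ghat k i j p)"

lemma harmonic_metric_iff_contracted_christoffel:
  "harmonic_metric m G Ghat \<longleftrightarrow>
    (\<forall>p\<in>coords m. \<forall>k\<in>{1..m}. contracted_christoffel m G Ghat k p = contracted_christoffel m G G k p)"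
  unfolding harmonic_metric_def contracted_christoffel_def
  by (simp add: right_diff_distrib sum_subtractf)

lemma contracted_christoffel_egorov:
  assumes m: "m \<ge> 2" and "f (p m) \<noteq> 0" and "g (p m) \<noteq> 0" and "g differentiable (at (p m))"
    and k: "k \<in> {1..m}"
  shows "contracted_christoffel m (egorov m f) (egorov m g) k p =
    (if k = m - 1 then - real (m - 2) * deriv g (p m) / (2 * f (p m)) else 0)"
proof -
  let ?c = "if k = m - 1 then - deriv g (p m) / (2 * f (p m)) else 0"
  have "contracted_christoffel m (egorov m f) (egorov m g) k p =
      (\<Sum>i=1..m. egorov m (\<lambda>x. 1 / f x) p i (egorov_partner m i) *
        christoffel m (egorov m g) k i (egorov_partner m i) p)"
    unfolding contracted_christoffel_def metric_inv_egorov[of m f p, OF m assms(2)]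
    using sum_egorov_row[OF m] by simp
  also have "\<dots> = (\<Sum>i=1..m. if i \<le> m - 2 then ?c else 0)"
    using assms by (intro sum.cong) (simp_all add: egorov_partner_entry christoffel_egorov)
  also have "\<dots> = (\<Sum>i=1..m-2. ?c)"
    by (rule sum.mono_neutral_cong_right) auto
  finally show ?thesis by simp
qed

lemma ball_coords_last:
  assumes "m \<ge> 1"
  shows "(\<forall>p\<in>coords m. P (p m)) \<longleftrightarrow> (\<forall>x. P x)"
proof -
  have "(\<lambda>i. if i = m then x else 0) \<in> coords m" for x
    using assms by (simp add: coords_def)
  then show ?thesis by force
qed

lemma smooth_fun_differentiable: "smooth_fun f \<Longrightarrow> f differentiable (at x)"
  unfolding smooth_fun_def by (metis funpow_0)

theorem theorem4p1:
  fixes m :: nat and f fhat :: "real \<Rightarrow> real"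
  assumes "m \<ge> 3"
    and "\<forall>x. f x > 0" and "smooth_fun f"
    and "\<forall>x. fhat x > 0" and "smooth_fun fhat"
  shows "harmonic_metric m (egorov m f) (egorov m fhat) \<longleftrightarrow> deriv fhat = deriv f"
proof -
  have m: "m \<ge> 2" "m - 1 \<in> {1..m}" and "real (m - 2) \<noteq> 0"
    using assms(1) by auto
  moreover have "f x \<noteq> 0" "fhat x \<noteq> 0" for x
    using assms(2,4) by (metis less_irrefl)+
  moreover have "f differentiable (at x)" "fhat differentiable (at x)" for x
    using assms(3,5) by (simp_all add: smooth_fun_differentiable)
  ultimately have "harmonic_metric m (egorov m f) (egorov m fhat) \<longleftrightarrow>
      (\<forall>p\<in>coords m. deriv fhat (p m) = deriv f (p m))"
    unfolding harmonic_metric_iff_contracted_christoffel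
    by (auto simp: contracted_christoffel_egorov)
  also have "\<dots> \<longleftrightarrow> deriv fhat = deriv f"
    using ball_coords_last[of m "\<lambda>x. deriv fhat x = deriv f x"] m by (simp add: fun_eq_iff)
  finally show ?thesis .
qed

end
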